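(* Let $X$ be a connected, locally connected Hausdorff topological space, $V$ a locally convex topological vector space, and $f:X\to V$ a continuous map that has local convexity data. If $f$ is open onto its image, then $f(X)$ is a locally convex subset of $V$. If, moreover, $f(X)$ is closed in some convex subset of $V$ (with the topology induced from $V$), then $f(X)$ is convex.
   Context: A subset $C\subset V$ is a cone with vertex $v_0$ if $v_0\in C$ and $(1-\lambda)v_0+\lambda v\in C$ for every $\lambda\ge 0$ and every $v\in C$, $v\ne v_0$; it is a convex cone if it is moreover convex. A continuous map $f:X\to V$ (with $X$ connected, locally connected, Hausdorff and $V$ a locally convex topological vector space) has local convexity data if for each $x\in X$ and every sufficiently small open neighborhood $U_x$ of $x$ there is a convex cone $C_x\subset V$ with vertex $f(x)$, endowed with the subspace topology from $V$, such that (VN) $f(U_x)\subset C_x$ and $f(U_x)$ is a neighborhood of $f(x)$ in $C_x$; and (SLO) $f|_{U_x}:U_x\to C_x$ is an open map, and for every neighborhood $U'_x\subset U_x$ of $x$ the set $f(U'_x)$ is a neighborhood of $f(x)$ in $C_x$. A subset $Y\subset V$ is locally convex if every $y\in Y$ has a neighborhood $N$ in $V$ with $N\cap Y$ convex. "Open onto its image" means $f:X\to f(X)$ is open when $f(X)$ carries the subspace topology. *)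

theory Defs
  imports "HOL-Analysis.Analysis"
begin

definition locally_convex_tvs :: "'b::{real_vector,topological_space} itself \<Rightarrow> bool" where
  "locally_convex_tvs (T :: 'b itself) \<longleftrightarrow>
     continuous_on UNIV (\<lambda>p::'b \<times> 'b. fst p + snd p) \<and>
     continuous_on UNIV (\<lambda>p::real \<times> 'b. fst p *\<^sub>R snd p) \<and>
     (\<forall>U (x::'b). open U \<and> x \<in> U \<longrightarrow> (\<exists>W. open W \<and> convex W \<and> x \<in> W \<and> W \<subseteq> U))"

definition cone_with_vertex :: "'b::real_vector set \<Rightarrow> 'b \<Rightarrow> bool" where
  "cone_with_vertex C v0 \<longleftrightarrow> v0 \<in> C \<and>
     (\<forall>t::real. t \<ge> 0 \<longrightarrow> (\<forall>v\<in>C. v \<noteq> v0 \<longrightarrow> (1 - t) *\<^sub>R v0 + t *\<^sub>R v \<in> C))"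

definition convex_cone_with_vertex :: "'b::real_vector set \<Rightarrow> 'b \<Rightarrow> bool" where
  "convex_cone_with_vertex C v0 \<longleftrightarrow> cone_with_vertex C v0 \<and> convex C"

definition nbhd_in :: "'b::topological_space set \<Rightarrow> 'b set \<Rightarrow> 'b \<Rightarrow> bool" where
  "nbhd_in S N y \<longleftrightarrow> N \<subseteq> S \<and> (\<exists>W. openin (top_of_set S) W \<and> y \<in> W \<and> W \<subseteq> N)"

definition local_convexity_data :: "('a::topological_space \<Rightarrow> 'b::{real_vector,topological_space}) \<Rightarrow> bool" where
  "local_convexity_data f \<longleftrightarrow>
    (\<forall>x. \<exists>N. open N \<and> x \<in> N \<and>
      (\<forall>U. open U \<and> x \<in> U \<and> U \<subseteq> N \<longrightarrow>
        (\<exists>C. convex_cone_with_vertex C (f x) \<and>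
           \<comment> \<open>(VN)\<close>
           f ` U \<subseteq> C \<and> nbhd_in C (f ` U) (f x) \<and>
           \<comment> \<open>(SLO)\<close>
           (\<forall>G. open G \<and> G \<subseteq> U \<longrightarrow> openin (top_of_set C) (f ` G)) \<and>
           (\<forall>U'. U' \<subseteq> U \<and> (\<exists>G. open G \<and> x \<in> G \<and> G \<subseteq> U') \<longrightarrow> nbhd_in C (f ` U') (f x)))))"

definition open_onto_image :: "('a::topological_space \<Rightarrow> 'b::topological_space) \<Rightarrow> bool" where
  "open_onto_image f \<longleftrightarrow> (\<forall>U. open U \<longrightarrow> openin (top_of_set (range f)) (f ` U))"

definition locally_convex_set :: "'b::{real_vector,topological_space} set \<Rightarrow> bool" where
  "locally_convex_set Y \<longleftrightarrow> (\<forall>y\<in>Y. \<exists>N. (\<exists>G. open G \<and> y \<in> G \<and> G \<subseteq> N) \<and> convex (N \<inter> Y))"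

end

theory Submission
  imports Defs
begin

(* Local convexity data and openness of f onto its image make the image Y = f(X), near each of
   its points y, the intersection of a convex open set Q_y with a convex cone y + D_y, where D_y
   is necessarily the cone of feasible directions of Y at y.
   For convexity fix p in Y. The set of z in Y with [p,z] in Y is closed in Y because Y is closed
   in a convex set, and it is open in Y: if [p,y] lies in Y, then both +-(y - p) are feasible at
   the interior points w of the segment, which makes D_w locally constant, hence constant, on
   ]p,y[, and it contains D_y. By the tube lemma, for z in Y near y every point (1-t)p + tz with t
   not too small lies in some Q_w, w in ]p,y], and differs from w by a vector of D_w.
   Connectedness of Y concludes. *)

definition feasible_directions :: "'a::real_vector set \<Rightarrow> 'a \<Rightarrow> 'a set" where
  "feasible_directions Y y = {k. \<forall>\<^sub>F s in at_right 0. y + s *\<^sub>R k \<in> Y}"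

definition conic_nbhd :: "'a::{real_vector,topological_space} set \<Rightarrow> 'a \<Rightarrow> 'a set \<Rightarrow> 'a set \<Rightarrow> bool" where
  "conic_nbhd Y y K Q \<longleftrightarrow> convex_cone K \<and> open Q \<and> convex Q \<and> y \<in> Q \<and> Q \<inter> Y = Q \<inter> (+) y ` K"

definition segment_star :: "'a::real_vector set \<Rightarrow> 'a \<Rightarrow> 'a set" where
  "segment_star Y p = {z \<in> Y. closed_segment p z \<subseteq> Y}"

definition locally_conic :: "'a::{real_vector,topological_space} set \<Rightarrow> bool" where
  "locally_conic Y \<longleftrightarrow> (\<forall>y\<in>Y. \<exists>K Q. conic_nbhd Y y K Q)"

lemma tvs_continuous_on_add:
  assumes "locally_convex_tvs TYPE('a::{real_vector,topological_space})"
    and "continuous_on S g" "continuous_on S h"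
  shows "continuous_on S (\<lambda>x. g x + h x :: 'a)"
  using continuous_on_compose2[OF _ continuous_on_Pair[OF assms(2,3)]] assms(1)
  unfolding locally_convex_tvs_def by fastforce

lemma tvs_continuous_on_scaleR:
  assumes "locally_convex_tvs TYPE('a::{real_vector,topological_space})"
    and "continuous_on S c" "continuous_on S g"
  shows "continuous_on S (\<lambda>x. c x *\<^sub>R (g x :: 'a))"
  using continuous_on_compose2[OF _ continuous_on_Pair[OF assms(2,3)]] assms(1)
  unfolding locally_convex_tvs_def by fastforce

lemma tvs_continuous_on_segment:
  assumes "locally_convex_tvs TYPE('a::{real_vector,topological_space})"
    and "continuous_on S t" "continuous_on S z"
  shows "continuous_on S (\<lambda>x. (1 - t x) *\<^sub>R p + t x *\<^sub>R (z x :: 'a))"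
  by (intro tvs_continuous_on_add[OF assms(1)] tvs_continuous_on_scaleR[OF assms(1)]
      continuous_intros assms(2,3))

lemma eventually_continuous_on_in_open:
  assumes "continuous_on UNIV g" "open Q" "g x \<in> Q"
  shows "\<forall>\<^sub>F t in at x within S. g t \<in> Q"
proof (rule topological_tendstoD[OF _ assms(2,3)])
  show "(g \<longlongrightarrow> g x) (at x within S)"
    using assms(1) tendsto_within_subset unfolding continuous_on_def by blast
qed

lemma conic_nbhdD:
  assumes "conic_nbhd Y a K Q"
  shows "convex_cone K" "open Q" "convex Q" "a \<in> Q"
  using assms unfolding conic_nbhd_def by auto

lemma conic_nbhd_mem_iff:
  assumes "conic_nbhd Y a K Q" "x \<in> Q"
  shows "x \<in> Y \<longleftrightarrow> x - a \<in> K"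
proof -
  have "x \<in> (+) a ` K \<longleftrightarrow> x - a \<in> K"
    by (metis add_diff_cancel_left' diff_add_cancel image_iff add.commute)
  then show ?thesis
    using assms unfolding conic_nbhd_def by blast
qed

lemma conic_nbhd_convex_Int:
  assumes "conic_nbhd Y a K Q"
  shows "convex (Q \<inter> Y)"
  using assms convex_Int convex_translation convex_cone_def unfolding conic_nbhd_def by metis

lemma tvs_eventually_ray_in_open:
  assumes tvs: "locally_convex_tvs TYPE('a::{real_vector,topological_space})"
    and "open Q" "m \<in> Q"
  shows "\<forall>\<^sub>F s in at_right 0. m + s *\<^sub>R k \<in> (Q :: 'a set)"
proof (rule eventually_continuous_on_in_open)
  show "continuous_on UNIV (\<lambda>s::real. m + s *\<^sub>R k)"
    by (intro tvs_continuous_on_add[OF tvs] tvs_continuous_on_scaleR[OF tvs] continuous_intros)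
qed (use assms in auto)

lemma conic_nbhd_subset_feasible_directions:
  assumes tvs: "locally_convex_tvs TYPE('a::{real_vector,topological_space})"
    and nbhd: "conic_nbhd Y a K Q" and m: "m \<in> Q" "m \<in> Y"
  shows "K \<subseteq> feasible_directions Y (m :: 'a)"
proof
  fix k assume k: "k \<in> K"
  have cone: "convex_cone K" and "open Q"
    using conic_nbhdD[OF nbhd] by auto
  have "m - a \<in> K"
    using conic_nbhd_mem_iff[OF nbhd] m by blast
  then have ray: "m + s *\<^sub>R k - a \<in> K" if "s > 0" for s
    using convex_cone_add[OF cone _ convex_cone_scaleR[OF cone _ k]] that
    by (metis diff_add_eq less_eq_real_def)
  have "\<forall>\<^sub>F s in at_right 0. m + s *\<^sub>R k \<in> Q"
    using tvs_eventually_ray_in_open[OF tvs \<open>open Q\<close> m(1)] .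
  moreover have "\<forall>\<^sub>F s in at_right (0::real). 0 < s"
    by (rule eventually_at_right_less)
  ultimately have "\<forall>\<^sub>F s in at_right 0. m + s *\<^sub>R k \<in> Y"
    by eventually_elim (use conic_nbhd_mem_iff[OF nbhd] ray in blast)
  then show "k \<in> feasible_directions Y m"
    unfolding feasible_directions_def by simp
qed

lemma feasible_directions_subset_conic_nbhd:
  assumes tvs: "locally_convex_tvs TYPE('a::{real_vector,topological_space})"
    and nbhd: "conic_nbhd Y a K Q" and m: "m \<in> Q" and towards_a: "a - m \<in> K"
  shows "feasible_directions Y (m :: 'a) \<subseteq> K"
proof
  fix k assume "k \<in> feasible_directions Y m"
  then have "\<forall>\<^sub>F s in at_right 0. m + s *\<^sub>R k \<in> Y"
    unfolding feasible_directions_def by simp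
  moreover have "\<forall>\<^sub>F s in at_right 0. m + s *\<^sub>R k \<in> Q"
    using tvs_eventually_ray_in_open[OF tvs conic_nbhdD(2)[OF nbhd] m] .
  moreover have "\<forall>\<^sub>F s in at_right (0::real). 0 < s"
    by (rule eventually_at_right_less)
  ultimately have "\<forall>\<^sub>F s in at_right 0. m + s *\<^sub>R k \<in> Y \<and> m + s *\<^sub>R k \<in> Q \<and> 0 < s"
    by eventually_elim blast
  then obtain s where s: "0 < s" "m + s *\<^sub>R k - a \<in> K"
    using eventually_happens'[OF trivial_limit_at_right_real] conic_nbhd_mem_iff[OF nbhd] by blast
  have cone: "convex_cone K"
    using conic_nbhdD(1)[OF nbhd] .
  have "s *\<^sub>R k \<in> K"
    using convex_cone_add[OF cone s(2) towards_a] by (simp add: algebra_simps)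
  then have "(1 / s) *\<^sub>R (s *\<^sub>R k) \<in> K"
    using convex_cone_scaleR[OF cone] s(1) by (meson less_eq_real_def zero_le_divide_1_iff)
  then show "k \<in> K"
    using s(1) by simp
qed

lemma feasible_directions_conic_nbhd:
  assumes tvs: "locally_convex_tvs TYPE('a::{real_vector,topological_space})"
    and nbhd: "conic_nbhd Y a K Q"
  shows "feasible_directions Y (a :: 'a) = K"
proof -
  have a: "a \<in> Q" "a - a \<in> K"
    using conic_nbhdD[OF nbhd] convex_cone_contains_0 by auto
  then have "a \<in> Y"
    using conic_nbhd_mem_iff[OF nbhd] by blast
  then have "K \<subseteq> feasible_directions Y a"
    by (rule conic_nbhd_subset_feasible_directions[OF tvs nbhd a(1)])
  then show ?thesis
    using feasible_directions_subset_conic_nbhd[OF tvs nbhd a] by blast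
qed

lemma locally_conic_feasible_directions:
  assumes "locally_convex_tvs TYPE('a::{real_vector,topological_space})"
    and "locally_conic Y" "y \<in> Y"
  shows "\<exists>Q. conic_nbhd Y (y :: 'a) (feasible_directions Y y) Q"
  using assms feasible_directions_conic_nbhd unfolding locally_conic_def by metis

lemma feasible_directions_segment_forward:
  assumes "closed_segment p y \<subseteq> Y" "0 \<le> t" "t < 1"
  shows "y - p \<in> feasible_directions Y ((1 - t) *\<^sub>R p + t *\<^sub>R y)"
proof -
  have "(1 - t) *\<^sub>R p + t *\<^sub>R y + s *\<^sub>R (y - p) \<in> Y" if "s \<in> {0<..<1 - t}" for s
  proof -
    have "(1 - (t + s)) *\<^sub>R p + (t + s) *\<^sub>R y \<in> closed_segment p y"
      unfolding in_segment using that assms(2) by (intro exI[of _ "t + s"]) auto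
    then show ?thesis
      using assms(1) by (auto simp: algebra_simps)
  qed
  then show ?thesis
    using eventually_at_right_real[of 0 "1 - t"] assms(3)
    unfolding feasible_directions_def by (auto elim: eventually_mono)
qed

lemma feasible_directions_segment_backward:
  assumes "closed_segment p y \<subseteq> Y" "0 < t" "t \<le> 1"
  shows "p - y \<in> feasible_directions Y ((1 - t) *\<^sub>R p + t *\<^sub>R y)"
  using feasible_directions_segment_forward[of y p Y "1 - t"] assms
  by (simp add: closed_segment_commute add.commute)

lemma closed_segment_subset_iff:
  "closed_segment p z \<subseteq> Y \<longleftrightarrow> (\<forall>t\<in>{0..1}. (1 - t) *\<^sub>R p + t *\<^sub>R z \<in> Y)"
  unfolding closed_segment_def by fastforce

lemma closed_segment_initial_part:
  assumes "0 < b" "0 \<le> t" "t \<le> b"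
  shows "(1 - t) *\<^sub>R p + t *\<^sub>R z \<in> closed_segment p ((1 - b) *\<^sub>R p + b *\<^sub>R z)"
proof -
  have "(1 - t) *\<^sub>R p + t *\<^sub>R z = (1 - t / b) *\<^sub>R p + (t / b) *\<^sub>R ((1 - b) *\<^sub>R p + b *\<^sub>R z)"
    using assms(1) by (simp add: algebra_simps)
  then show ?thesis
    unfolding in_segment using assms by (intro exI[of _ "t / b"]) auto
qed

lemma closed_segment_subset_split:
  assumes "closed_segment p ((1 - b) *\<^sub>R p + b *\<^sub>R z) \<subseteq> Y" "0 < b"
    and "\<forall>t\<in>{b..1}. (1 - t) *\<^sub>R p + t *\<^sub>R z \<in> Y"
  shows "closed_segment p z \<subseteq> Y"
proof
  fix x assume "x \<in> closed_segment p z"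
  then obtain t where t: "0 \<le> t" "t \<le> 1" "x = (1 - t) *\<^sub>R p + t *\<^sub>R z"
    unfolding in_segment by blast
  show "x \<in> Y"
  proof (cases "b \<le> t")
    case True
    then show ?thesis
      using assms(3) t by auto
  next
    case False
    then show ?thesis
      using closed_segment_initial_part[of b t p z] assms(1,2) t by auto
  qed
qed

context
  fixes Y :: "'a::{real_vector,topological_space} set" and Q :: "'a \<Rightarrow> 'a set" and p y :: 'a
  assumes tvs: "locally_convex_tvs TYPE('a)"
    and conic: "\<And>v. v \<in> Y \<Longrightarrow> conic_nbhd Y v (feasible_directions Y v) (Q v)"
    and segment: "closed_segment p y \<subseteq> Y"
begin

lemma segment_mem: "0 \<le> t \<Longrightarrow> t \<le> 1 \<Longrightarrow> (1 - t) *\<^sub>R p + t *\<^sub>R y \<in> Y"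
  using segment in_segment(1) by blast

lemma segment_endpoints_mem: "p \<in> Y" "y \<in> Y"
  using segment by auto

lemma segment_direction:
  assumes "0 < l" "l \<le> 1" "l < 1 \<or> c \<le> 0"
  shows "c *\<^sub>R (y - p) \<in> feasible_directions Y ((1 - l) *\<^sub>R p + l *\<^sub>R y)"
proof -
  have cone: "convex_cone (feasible_directions Y ((1 - l) *\<^sub>R p + l *\<^sub>R y))"
    using conic_nbhdD(1)[OF conic[OF segment_mem]] assms by simp
  show ?thesis
  proof (cases "c \<le> 0")
    case True
    then have "(- c) *\<^sub>R (p - y) \<in> feasible_directions Y ((1 - l) *\<^sub>R p + l *\<^sub>R y)"
      by (intro convex_cone_scaleR[OF cone] feasible_directions_segment_backward[OF segment])
        (use assms in auto)
    then show ?thesis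
      by (simp add: algebra_simps)
  next
    case False
    then show ?thesis
      by (intro convex_cone_scaleR[OF cone] feasible_directions_segment_forward[OF segment])
        (use assms in auto)
  qed
qed

lemma feasible_directions_open_segment_const:
  assumes "a \<in> {0<..<1}" "b \<in> {0<..<1}"
  shows "feasible_directions Y ((1 - a) *\<^sub>R p + a *\<^sub>R y) =
         feasible_directions Y ((1 - b) *\<^sub>R p + b *\<^sub>R y)"
proof (rule connected_local_const[OF connected_Ioo assms], intro ballI)
  let ?w = "\<lambda>t. (1 - t) *\<^sub>R p + t *\<^sub>R y"
  fix a :: real assume a: "a \<in> {0<..<1}"
  have nbhd: "conic_nbhd Y (?w a) (feasible_directions Y (?w a)) (Q (?w a))"
    using conic segment_mem a by simp
  have "continuous_on UNIV ?w"
    by (intro tvs_continuous_on_segment[OF tvs] continuous_intros)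
  then have "\<forall>\<^sub>F b in at a within {0<..<1}. ?w b \<in> Q (?w a)"
    by (rule eventually_continuous_on_in_open) (use conic_nbhdD[OF nbhd] in auto)
  moreover have "\<forall>\<^sub>F b in at a within {0<..<1}. b \<in> {0<..<1}"
    using eventually_at_in_open'[of "{0<..<1}" a] at_within_open[of a "{0<..<1}"] a by simp
  ultimately show "\<forall>\<^sub>F b in at a within {0<..<1}.
      feasible_directions Y (?w a) = feasible_directions Y (?w b)"
  proof eventually_elim
    case (elim b)
    have "?w a - ?w b = (a - b) *\<^sub>R (y - p)"
      by (simp add: algebra_simps)
    then have towards_a: "?w a - ?w b \<in> feasible_directions Y (?w a)"
      using segment_direction[of a "a - b"] a by simp
    have wb: "?w b \<in> Q (?w a)" "?w b \<in> Y"
      using elim segment_mem by auto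
    show ?case
      using conic_nbhd_subset_feasible_directions[OF tvs nbhd wb]
        feasible_directions_subset_conic_nbhd[OF tvs nbhd wb(1) towards_a] by (rule subset_antisym)
  qed
qed

lemma feasible_directions_endpoint_subset:
  assumes "0 < l" "l \<le> 1"
  shows "feasible_directions Y y \<subseteq> feasible_directions Y ((1 - l) *\<^sub>R p + l *\<^sub>R y)"
proof (cases "l = 1")
  case False
  let ?w = "\<lambda>t. (1 - t) *\<^sub>R p + t *\<^sub>R y"
  have nbhd: "conic_nbhd Y y (feasible_directions Y y) (Q y)"
    using conic[OF segment_endpoints_mem(2)] .
  have "continuous_on UNIV ?w"
    by (intro tvs_continuous_on_segment[OF tvs] continuous_intros)
  then have "\<forall>\<^sub>F t in at_left 1. ?w t \<in> Q y"
    by (rule eventually_continuous_on_in_open) (use conic_nbhdD[OF nbhd] in auto)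
  moreover have "\<forall>\<^sub>F t in at_left 1. t \<in> {0<..<1::real}"
    by (rule eventually_at_left_real) simp
  ultimately have "\<forall>\<^sub>F t in at_left 1. ?w t \<in> Q y \<and> t \<in> {0<..<1}"
    by eventually_elim blast
  then obtain t where t: "?w t \<in> Q y" "t \<in> {0<..<1}"
    using eventually_happens'[OF trivial_limit_at_left_real] by blast
  then have "feasible_directions Y y \<subseteq> feasible_directions Y (?w t)"
    using conic_nbhd_subset_feasible_directions[OF tvs nbhd] segment_mem by simp
  also have "\<dots> = feasible_directions Y (?w l)"
    by (rule feasible_directions_open_segment_const) (use t(2) assms False in auto)
  finally show ?thesis .
qed simp

lemma conic_nbhd_segment_mem:
  assumes z: "z \<in> Q y" "z \<in> Y" and t: "0 \<le> t" "t \<le> 1" and l: "0 < l" "l \<le> 1"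
    and x: "(1 - t) *\<^sub>R p + t *\<^sub>R z \<in> Q ((1 - l) *\<^sub>R p + l *\<^sub>R y)"
  shows "(1 - t) *\<^sub>R p + t *\<^sub>R z \<in> Y"
proof -
  let ?v = "(1 - l) *\<^sub>R p + l *\<^sub>R y"
  have nbhd: "conic_nbhd Y ?v (feasible_directions Y ?v) (Q ?v)"
    using conic segment_mem l by (simp add: less_imp_le)
  note cone = conic_nbhdD(1)[OF nbhd]
  have "z - y \<in> feasible_directions Y y"
    using conic_nbhd_mem_iff[OF conic[OF segment_endpoints_mem(2)] z(1)] z(2) by simp
  then have "t *\<^sub>R (z - y) \<in> feasible_directions Y ?v"
    using convex_cone_scaleR[OF cone t(1)] feasible_directions_endpoint_subset[OF l] by blast
  moreover have "(t - l) *\<^sub>R (y - p) \<in> feasible_directions Y ?v"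
    by (intro segment_direction) (use l t in auto)
  ultimately have "(t - l) *\<^sub>R (y - p) + t *\<^sub>R (z - y) \<in> feasible_directions Y ?v"
    using convex_cone_add[OF cone] by blast
  moreover have "(1 - t) *\<^sub>R p + t *\<^sub>R z - ?v = (t - l) *\<^sub>R (y - p) + t *\<^sub>R (z - y)"
    by (simp add: algebra_simps)
  ultimately show ?thesis
    using conic_nbhd_mem_iff[OF nbhd x] by simp
qed

lemma segment_tail_mem_near_endpoint:
  assumes "0 < b"
  shows "\<exists>N. open N \<and> y \<in> N \<and>
    (\<forall>z \<in> N \<inter> Q y \<inter> Y. \<forall>t \<in> {b..1}. (1 - t) *\<^sub>R p + t *\<^sub>R z \<in> Y)"
proof -
  let ?w = "\<lambda>l. (1 - l) *\<^sub>R p + l *\<^sub>R y"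
  let ?\<Phi> = "\<lambda>q. (1 - snd q) *\<^sub>R p + snd q *\<^sub>R fst q"
  define W where "W = (\<Union>l\<in>{0<..1}. ?\<Phi> -` Q (?w l))"
  have "continuous_on UNIV ?\<Phi>"
    by (intro tvs_continuous_on_segment[OF tvs] continuous_intros)
  then have open_W: "open W"
    unfolding W_def using conic_nbhdD(2)[OF conic[OF segment_mem]]
    by (intro open_UN ballI open_vimage) auto
  have tube: "{y} \<times> {b..1} \<subseteq> W"
  proof clarify
    fix l :: real assume l: "l \<in> {b..1}"
    then have "?\<Phi> (y, l) \<in> Q (?w l)"
      using conic_nbhdD(4)[OF conic[OF segment_mem]] assms by simp
    then show "(y, l) \<in> W"
      unfolding W_def using l assms by (intro UN_I[of l]) auto
  qed
  obtain N where N: "y \<in> N" "open N" "N \<times> {b..1} \<subseteq> W"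
    using Elementary_Topology.tube_lemma[OF compact_Icc open_W tube] by blast
  have "\<forall>z \<in> N \<inter> Q y \<inter> Y. \<forall>t \<in> {b..1}. (1 - t) *\<^sub>R p + t *\<^sub>R z \<in> Y"
  proof (intro ballI)
    fix z t assume z: "z \<in> N \<inter> Q y \<inter> Y" and t: "t \<in> {b..1}"
    then have "(z, t) \<in> W"
      using N(3) by blast
    then obtain l where l: "0 < l" "l \<le> 1" "?\<Phi> (z, t) \<in> Q (?w l)"
      unfolding W_def by auto
    show "(1 - t) *\<^sub>R p + t *\<^sub>R z \<in> Y"
      by (rule conic_nbhd_segment_mem[OF _ _ _ _ l(1,2)]) (use z t l(3) assms in auto)
  qed
  then show ?thesis
    using N(1,2) by blast
qed

lemma segment_extends_near_endpoint:
  obtains N where "open N" "y \<in> N" "\<And>z. z \<in> N \<Longrightarrow> z \<in> Y \<Longrightarrow> closed_segment p z \<subseteq> Y"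
proof -
  let ?w = "\<lambda>l. (1 - l) *\<^sub>R p + l *\<^sub>R y"
  have nbhd_p: "conic_nbhd Y p (feasible_directions Y p) (Q p)"
    using conic segment_endpoints_mem(1) by simp
  have "continuous_on UNIV ?w"
    by (intro tvs_continuous_on_segment[OF tvs] continuous_intros)
  then have "\<forall>\<^sub>F b in at_right 0. ?w b \<in> Q p"
    by (rule eventually_continuous_on_in_open) (use conic_nbhdD[OF nbhd_p] in auto)
  moreover have "\<forall>\<^sub>F b in at_right 0. b \<in> {0<..<1::real}"
    by (rule eventually_at_right_real) simp
  ultimately have "\<forall>\<^sub>F b in at_right 0. ?w b \<in> Q p \<and> b \<in> {0<..<1}"
    by eventually_elim blast
  then obtain b where b: "?w b \<in> Q p" "0 < b" "b < 1"
    using eventually_happens'[OF trivial_limit_at_right_real] by auto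
  \<comment> \<open>For t < b the cones along the segment need not contain z - y; there the convexity
    of Q p \<inter> Y is used instead.\<close>
  obtain N where N: "open N" "y \<in> N"
    and tail: "\<forall>z \<in> N \<inter> Q y \<inter> Y. \<forall>t \<in> {b..1}. (1 - t) *\<^sub>R p + t *\<^sub>R z \<in> Y"
    using segment_tail_mem_near_endpoint[OF b(2)] by blast
  have "continuous_on UNIV (\<lambda>z. (1 - b) *\<^sub>R p + b *\<^sub>R z)"
    by (intro tvs_continuous_on_segment[OF tvs] continuous_intros)
  then have "open (N \<inter> Q y \<inter> (\<lambda>z. (1 - b) *\<^sub>R p + b *\<^sub>R z) -` Q p)"
    using N(1) conic_nbhdD(2)[OF nbhd_p] conic_nbhdD(2)[OF conic[OF segment_endpoints_mem(2)]]
    by (intro open_Int open_vimage) auto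
  then show thesis
  proof (rule that)
    show "y \<in> N \<inter> Q y \<inter> (\<lambda>z. (1 - b) *\<^sub>R p + b *\<^sub>R z) -` Q p"
      using N(2) b(1) conic_nbhdD(4)[OF conic[OF segment_endpoints_mem(2)]] by simp
  next
    fix z assume z: "z \<in> N \<inter> Q y \<inter> (\<lambda>z. (1 - b) *\<^sub>R p + b *\<^sub>R z) -` Q p" "z \<in> Y"
    have "p \<in> Q p \<inter> Y" "(1 - b) *\<^sub>R p + b *\<^sub>R z \<in> Q p \<inter> Y"
      using conic_nbhdD(4)[OF nbhd_p] segment_endpoints_mem(1) z tail b by auto
    then have "closed_segment p ((1 - b) *\<^sub>R p + b *\<^sub>R z) \<subseteq> Q p \<inter> Y"
      using conic_nbhd_convex_Int[OF nbhd_p] unfolding convex_contains_segment by blast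
    then have "closed_segment p ((1 - b) *\<^sub>R p + b *\<^sub>R z) \<subseteq> Y"
      by blast
    then show "closed_segment p z \<subseteq> Y"
      using closed_segment_subset_split[of p b z Y] tail z b(2) by auto
  qed
qed

end

lemma closedin_segment_star:
  assumes tvs: "locally_convex_tvs TYPE('a::{real_vector,topological_space})"
    and K: "convex K" "Y \<subseteq> K" "closedin (top_of_set K) Y" and p: "p \<in> Y"
  shows "closedin (top_of_set Y) (segment_star Y (p :: 'a))"
proof -
  have slice: "closedin (top_of_set K) (K \<inter> (\<lambda>z. (1 - t) *\<^sub>R p + t *\<^sub>R z) -` Y)"
    if t: "t \<in> {0..1}" for t :: real
  proof (rule continuous_closedin_preimage_gen[OF _ _ K(3)])
    show "continuous_on K (\<lambda>z. (1 - t) *\<^sub>R p + t *\<^sub>R z)"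
      by (intro tvs_continuous_on_segment[OF tvs] continuous_intros)
    show "(\<lambda>z. (1 - t) *\<^sub>R p + t *\<^sub>R z) \<in> K \<rightarrow> K"
      using t p K(1,2) by (auto intro!: convexD_alt)
  qed
  have "segment_star Y p = Y \<inter> (\<Inter>t\<in>{0..1}. K \<inter> (\<lambda>z. (1 - t) *\<^sub>R p + t *\<^sub>R z) -` Y)"
    using K(2) unfolding segment_star_def closed_segment_subset_iff by auto
  moreover have "closedin (top_of_set K) (\<Inter>t\<in>{0..1}. K \<inter> (\<lambda>z. (1 - t) *\<^sub>R p + t *\<^sub>R z) -` Y)"
    using slice by (intro closedin_INT) auto
  ultimately have "closedin (top_of_set K) (segment_star Y p)"
    using K(3) by (simp add: closedin_Int)
  then show ?thesis
    by (rule closedin_subset_trans) (use K(2) in \<open>auto simp: segment_star_def\<close>)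
qed

lemma openin_segment_star:
  assumes tvs: "locally_convex_tvs TYPE('a::{real_vector,topological_space})"
    and "locally_conic Y"
  shows "openin (top_of_set Y) (segment_star Y (p :: 'a))"
proof -
  obtain Q where Q: "\<And>v. v \<in> Y \<Longrightarrow> conic_nbhd Y v (feasible_directions Y v) (Q v)"
    using locally_conic_feasible_directions[OF assms] by metis
  show ?thesis
    unfolding openin_subopen[of _ "segment_star Y p"]
  proof
    fix y assume "y \<in> segment_star Y p"
    then have segment: "closed_segment p y \<subseteq> Y"
      unfolding segment_star_def by blast
    obtain N where "open N" "y \<in> N" and N: "\<And>z. z \<in> N \<Longrightarrow> z \<in> Y \<Longrightarrow> closed_segment p z \<subseteq> Y"
      using segment_extends_near_endpoint[OF tvs Q segment] by blast
    then have "openin (top_of_set Y) (Y \<inter> N)" "y \<in> Y \<inter> N" "Y \<inter> N \<subseteq> segment_star Y p"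
      using segment unfolding segment_star_def by auto
    then show "\<exists>T. openin (top_of_set Y) T \<and> y \<in> T \<and> T \<subseteq> segment_star Y p"
      by blast
  qed
qed

theorem convex_if_locally_conic_connected_closedin:
  assumes tvs: "locally_convex_tvs TYPE('a::{real_vector,topological_space})"
    and "locally_conic Y" "connected Y"
    and "convex K" "Y \<subseteq> K" "closedin (top_of_set K) Y"
  shows "convex (Y :: 'a set)"
  unfolding convex_contains_segment
proof (intro ballI)
  fix p z assume "p \<in> Y" "z \<in> Y"
  have "p \<in> segment_star Y p"
    using \<open>p \<in> Y\<close> unfolding segment_star_def by simp
  then have "segment_star Y p = Y"
    using \<open>connected Y\<close> openin_segment_star[OF tvs \<open>locally_conic Y\<close>]
      closedin_segment_star[OF tvs \<open>convex K\<close> \<open>Y \<subseteq> K\<close> \<open>closedin (top_of_set K) Y\<close> \<open>p \<in> Y\<close>]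
    unfolding connected_clopen by blast
  then show "closed_segment p z \<subseteq> Y"
    using \<open>z \<in> Y\<close> unfolding segment_star_def by blast
qed

lemma convex_cone_with_vertex_translate:
  assumes "convex_cone_with_vertex C v"
  shows "convex_cone ((\<lambda>c. c - v) ` C)"
  unfolding convex_cone_def conic_def
proof (intro conjI allI impI)
  have "v \<in> C" "convex C"
    using assms unfolding convex_cone_with_vertex_def cone_with_vertex_def by auto
  then show "(\<lambda>c. c - v) ` C \<noteq> {}" "convex ((\<lambda>c. c - v) ` C)"
    by auto
  fix x and t :: real assume "x \<in> (\<lambda>c. c - v) ` C" "0 \<le> t"
  then obtain c where c: "c \<in> C" "x = c - v"
    by blast
  have "(1 - t) *\<^sub>R v + t *\<^sub>R c \<in> C"
    using assms c \<open>0 \<le> t\<close> \<open>v \<in> C\<close> unfolding convex_cone_with_vertex_def cone_with_vertex_def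
    by (cases "c = v") (auto simp: algebra_simps)
  moreover have "t *\<^sub>R x = (1 - t) *\<^sub>R v + t *\<^sub>R c - v"
    unfolding c(2) by (simp add: algebra_simps)
  ultimately show "t *\<^sub>R x \<in> (\<lambda>c. c - v) ` C"
    by blast
qed

lemma locally_conic_range:
  fixes f :: "'a::topological_space \<Rightarrow> 'b::{real_vector,topological_space}"
  assumes tvs: "locally_convex_tvs TYPE('b)"
    and "local_convexity_data f" "open_onto_image f"
  shows "locally_conic (range f)"
  unfolding locally_conic_def
proof
  fix y assume "y \<in> range f"
  then obtain x where y: "y = f x"
    by blast
  obtain N C where N: "open N" "x \<in> N" and C: "convex_cone_with_vertex C y" "f ` N \<subseteq> C"
    "nbhd_in C (f ` N) y"
    using \<open>local_convexity_data f\<close> unfolding local_convexity_data_def y by (meson order_refl)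
  obtain T where T: "open T" "y \<in> T" "C \<inter> T \<subseteq> f ` N"
    using C(3) unfolding nbhd_in_def openin_open by blast
  obtain P where P: "open P" "f ` N = range f \<inter> P"
    using \<open>open_onto_image f\<close> N(1) unfolding open_onto_image_def openin_open by blast
  have "y \<in> T \<inter> P"
    using T(2) P(2) N(2) y by blast
  then obtain Q where Q: "open Q" "convex Q" "y \<in> Q" "Q \<subseteq> T \<inter> P"
    using tvs open_Int[OF T(1) P(1)] unfolding locally_convex_tvs_def by blast
  have "(+) y ` (\<lambda>c. c - y) ` C = C"
    by (simp add: image_image)
  moreover have "Q \<inter> range f = Q \<inter> C"
    using Q(4) P(2) T(3) C(2) by blast
  ultimately have "conic_nbhd (range f) y ((\<lambda>c. c - y) ` C) Q"
    unfolding conic_nbhd_def using convex_cone_with_vertex_translate[OF C(1)] Q(1-3) by simp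
  then show "\<exists>K Q. conic_nbhd (range f) y K Q"
    by blast
qed

lemma locally_conic_imp_locally_convex_set:
  assumes "locally_conic Y"
  shows "locally_convex_set Y"
  unfolding locally_convex_set_def
proof
  fix y assume "y \<in> Y"
  then obtain K Q where nbhd: "conic_nbhd Y y K Q"
    using assms unfolding locally_conic_def by blast
  have "open Q" "y \<in> Q" "convex (Q \<inter> Y)"
    using conic_nbhdD(2,4)[OF nbhd] conic_nbhd_convex_Int[OF nbhd] by auto
  then show "\<exists>N. (\<exists>G. open G \<and> y \<in> G \<and> G \<subseteq> N) \<and> convex (N \<inter> Y)"
    by blast
qed

theorem theorem2p12:
  fixes f :: "'a::t2_space \<Rightarrow> 'b::{real_vector,topological_space}"
  assumes "locally_convex_tvs TYPE('b)"
    and "connected (UNIV :: 'a set)"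
    and "locally connected (UNIV :: 'a set)"
    and "continuous_on UNIV f"
    and "local_convexity_data f"
    and "open_onto_image f"
  shows "locally_convex_set (range f) \<and>
         (\<forall>K. convex K \<and> range f \<subseteq> K \<and> closedin (top_of_set K) (range f) \<longrightarrow> convex (range f))"
proof -
  have conic: "locally_conic (range f)"
    using locally_conic_range assms(1,5,6) .
  moreover have "connected (range f)"
    using connected_continuous_image assms(4,2) .
  ultimately show ?thesis
    using locally_conic_imp_locally_convex_set convex_if_locally_conic_connected_closedin[OF assms(1)]
    by blast
qed

end
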